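(* Let $G$ be a connected nontrivial graph with $m$ vertices and let $n\geq3$. If $\min\{3n\lambda(G),\ 2(m+2e(G))\}> 6\delta(G)+2$, then $G\boxtimes C_n$ is super restricted edge-connected.
   Context: All graphs are finite, simple and undirected; "nontrivial" means having at least two vertices. $C_n$ denotes the cycle on $n$ vertices. For a graph $G$: $e(G)=|E(G)|$; $\delta(G)$ is the minimum degree; $\lambda(G)$ is the edge-connectivity. A restricted edge-cut of a connected graph $G$ is a set $S\subseteq E(G)$ such that $G-S$ is disconnected and every component of $G-S$ has at least $2$ vertices; $\lambda'(G)$ is the minimum cardinality of a restricted edge-cut. A graph is super restricted edge-connected if every minimum restricted edge-cut $S$ isolates an edge, i.e. some component of $G-S$ consists of exactly two (adjacent) vertices. The strong product $G\boxtimes H$ has vertex set $V(G)\times V(H)$, with $(x_1,y_1)$ and $(x_2,y_2)$ adjacent iff either $x_1=x_2$ and $y_1y_2\in E(H)$, or $y_1=y_2$ and $x_1x_2\in E(G)$, or $x_1x_2\in E(G)$ and $y_1y_2\in E(H)$. *)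

theory Defs
  imports Main
begin

type_synonym 'a graph = "'a set \<times> 'a set set"

definition verts :: "'a graph \<Rightarrow> 'a set" where "verts G = fst G"
definition edges :: "'a graph \<Rightarrow> 'a set set" where "edges G = snd G"

definition simple_graph :: "'a graph \<Rightarrow> bool" where
  "simple_graph G \<longleftrightarrow> finite (verts G) \<and>
     (\<forall>e\<in>edges G. \<exists>x y. x \<noteq> y \<and> x \<in> verts G \<and> y \<in> verts G \<and> e = {x, y})"

definition adj_rel :: "'a graph \<Rightarrow> ('a \<times> 'a) set" where
  "adj_rel G = {(x, y). {x, y} \<in> edges G}"

definition connected_graph :: "'a graph \<Rightarrow> bool" where
  "connected_graph G \<longleftrightarrow> verts G \<noteq> {} \<and>
     (\<forall>x\<in>verts G. \<forall>y\<in>verts G. (x, y) \<in> (adj_rel G)\<^sup>*)"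

definition components :: "'a graph \<Rightarrow> 'a set set" where
  "components G = {{y \<in> verts G. (x, y) \<in> (adj_rel G)\<^sup>*} | x. x \<in> verts G}"

definition num_edges :: "'a graph \<Rightarrow> nat" where "num_edges G = card (edges G)"

definition degree :: "'a graph \<Rightarrow> 'a \<Rightarrow> nat" where
  "degree G v = card {e \<in> edges G. v \<in> e}"

definition min_degree :: "'a graph \<Rightarrow> nat" where
  "min_degree G = Min (degree G ` verts G)"

definition del_edges :: "'a graph \<Rightarrow> 'a set set \<Rightarrow> 'a graph" where
  "del_edges G S = (verts G, edges G - S)"

definition edge_cut :: "'a graph \<Rightarrow> 'a set set \<Rightarrow> bool" where
  "edge_cut G S \<longleftrightarrow> S \<subseteq> edges G \<and> \<not> connected_graph (del_edges G S)"

definition edge_connectivity :: "'a graph \<Rightarrow> nat" where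
  "edge_connectivity G = Min {card S | S. edge_cut G S}"

definition restricted_edge_cut :: "'a graph \<Rightarrow> 'a set set \<Rightarrow> bool" where
  "restricted_edge_cut G S \<longleftrightarrow> edge_cut G S \<and>
     (\<forall>C\<in>components (del_edges G S). card C \<ge> 2)"

definition super_restricted_edge_connected :: "'a graph \<Rightarrow> bool" where
  "super_restricted_edge_connected G \<longleftrightarrow>
     (\<forall>S. restricted_edge_cut G S \<and> (\<forall>T. restricted_edge_cut G T \<longrightarrow> card S \<le> card T) \<longrightarrow>
        (\<exists>C\<in>components (del_edges G S). card C = 2))"

definition cycle_graph :: "nat \<Rightarrow> nat graph" where
  "cycle_graph n = ({0..<n}, {{i, (i + 1) mod n} | i. i < n})"

definition strong_product :: "'a graph \<Rightarrow> 'b graph \<Rightarrow> ('a \<times> 'b) graph" where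
  "strong_product G H = (verts G \<times> verts H,
     {{(x1, y1), (x2, y2)} | x1 y1 x2 y2.
        x1 \<in> verts G \<and> x2 \<in> verts G \<and> y1 \<in> verts H \<and> y2 \<in> verts H \<and>
        ((x1 = x2 \<and> {y1, y2} \<in> edges H) \<or> (y1 = y2 \<and> {x1, x2} \<in> edges G) \<or>
         ({x1, x2} \<in> edges G \<and> {y1, y2} \<in> edges H))})"

end

theory Submission
  imports Defs
begin

text \<open>Write \<open>\<delta>\<close> and \<open>\<lambda>\<close> for the minimum degree and edge-connectivity of \<open>G\<close>, and think of
  \<open>G \<boxtimes> C\<^sub>n\<close> as a grid of columns \<open>{x} \<times> C\<^sub>n\<close> and rows \<open>G \<times> {i}\<close>.
  Around an edge \<open>(x,0)(x,1)\<close> with \<open>deg x = \<delta>\<close> both ends have degree at most \<open>3\<delta> + 2\<close>, so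
  the other edges at these two vertices form a restricted cut of size at most \<open>6\<delta> + 2\<close>.
  Hence a minimum restricted cut \<open>S\<close> has at most \<open>6\<delta> + 2\<close> edges. If no component of the
  product minus \<open>S\<close> were a single edge, some component \<open>X\<close> and its complement would both have
  at least three vertices, and all edges leaving \<open>X\<close> lie in \<open>S\<close>. But there are at least
  \<open>6\<delta> + 3\<close> of them: if some column lies in \<open>X\<close> and another misses \<open>X\<close>, then every row and
  every pair of consecutive rows separates \<open>G\<close>, giving \<open>3n\<lambda>\<close> edges; otherwise, after
  possibly replacing \<open>X\<close> by its complement, every column meets \<open>X\<close>, and the columns not
  contained in \<open>X\<close> and their neighbours carry enough boundary edges.\<close>

section \<open>Cuts and components\<close>

lemma verts_del_edges [simp]: "verts (del_edges H S) = verts H"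
  by (simp add: del_edges_def verts_def)

lemma edges_del_edges [simp]: "edges (del_edges H S) = edges H - S"
  by (simp add: del_edges_def edges_def)

lemma adj_rel_iff [simp]: "(u, v) \<in> adj_rel H \<longleftrightarrow> {u, v} \<in> edges H"
  by (simp add: adj_rel_def)

lemma verts_cycle_graph [simp]: "verts (cycle_graph n) = {0..<n}"
  by (simp add: cycle_graph_def verts_def)

lemma reachable_sym: "(u, v) \<in> (adj_rel H)\<^sup>* \<Longrightarrow> (v, u) \<in> (adj_rel H)\<^sup>*"
proof -
  assume "(u, v) \<in> (adj_rel H)\<^sup>*"
  then have "(v, u) \<in> ((adj_rel H)\<inverse>)\<^sup>*" by (rule rtrancl_converseI)
  moreover have "(adj_rel H)\<inverse> = adj_rel H" by (auto simp: insert_commute)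
  ultimately show ?thesis by simp
qed

lemma reachable_closed:
  assumes "(u, v) \<in> (adj_rel H)\<^sup>*" "u \<in> B"
    and "\<And>x y. x \<in> B \<Longrightarrow> {x, y} \<in> edges H \<Longrightarrow> y \<in> B"
  shows "v \<in> B"
  using assms(1,2) by (induction rule: rtrancl_induct) (auto intro: assms(3))

lemma edge_connectivity_le:
  assumes "finite (edges H)" "edge_cut H S"
  shows "edge_connectivity H \<le> card S"
proof -
  have "{card T | T. edge_cut H T} \<subseteq> {..card (edges H)}"
    using assms(1) by (auto simp: edge_cut_def card_mono)
  then have "finite {card T | T. edge_cut H T}" by (rule finite_subset) simp
  then show ?thesis unfolding edge_connectivity_def using assms(2) by (intro Min_le) auto
qed

lemma edge_cut_if_separates:
  assumes "S \<subseteq> edges H" "x \<in> verts H" "x \<in> B" "z \<in> verts H" "z \<notin> B"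
    and "\<And>u v. u \<in> B \<Longrightarrow> v \<notin> B \<Longrightarrow> {u, v} \<in> edges H \<Longrightarrow> {u, v} \<in> S"
  shows "edge_cut H S"
proof -
  have "(x, z) \<notin> (adj_rel (del_edges H S))\<^sup>*"
  proof
    assume "(x, z) \<in> (adj_rel (del_edges H S))\<^sup>*"
    then have "z \<in> B" by (rule reachable_closed) (use assms(3,6) in auto)
    then show False using assms(5) by simp
  qed
  then show ?thesis using assms(1,2,4) by (auto simp: edge_cut_def connected_graph_def)
qed

lemma component_subset: "C \<in> components H \<Longrightarrow> C \<subseteq> verts H"
  unfolding components_def by auto

lemma edge_leaving_component:
  assumes "C \<in> components (del_edges H S)" "u \<in> C" "v \<in> verts H" "v \<notin> C" "{u, v} \<in> edges H"
  shows "{u, v} \<in> S"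
proof (rule ccontr)
  assume "{u, v} \<notin> S"
  then have "(u, v) \<in> adj_rel (del_edges H S)" using assms(5) by simp
  moreover obtain c where "C = {y \<in> verts H. (c, y) \<in> (adj_rel (del_edges H S))\<^sup>*}"
    using assms(1) by (auto simp: components_def)
  ultimately show False using assms(2-4) by (auto intro: rtrancl_into_rtrancl)
qed

lemma disconnected_two_components:
  assumes "\<not> connected_graph H" "verts H \<noteq> {}"
  obtains C D where "C \<in> components H" "D \<in> components H" "D \<subseteq> verts H - C"
proof -
  let ?R = "(adj_rel H)\<^sup>*"
  obtain c d where cd: "c \<in> verts H" "d \<in> verts H" "(c, d) \<notin> ?R"
    using assms unfolding connected_graph_def by blast
  let ?C = "{y \<in> verts H. (c, y) \<in> ?R}" and ?D = "{y \<in> verts H. (d, y) \<in> ?R}"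
  have "?D \<subseteq> verts H - ?C"
    using cd(3) by (auto dest: reachable_sym intro: rtrancl_trans)
  moreover have "?C \<in> components H" "?D \<in> components H"
    using cd unfolding components_def by blast+
  ultimately show ?thesis using that by blast
qed

definition isolating_edges :: "'a graph \<Rightarrow> 'a \<Rightarrow> 'a \<Rightarrow> 'a set set" where
  "isolating_edges H a b = {e \<in> edges H. e \<inter> {a, b} \<noteq> {} \<and> e \<noteq> {a, b}}"

lemma card_isolating_edges:
  assumes "finite (edges H)" "{a, b} \<in> edges H"
  shows "card (isolating_edges H a b) + 2 \<le> degree H a + degree H b"
proof -
  let ?Ea = "{e \<in> edges H. a \<in> e}" and ?Eb = "{e \<in> edges H. b \<in> e}"
  have fin: "finite ?Ea" "finite ?Eb" using assms(1) by simp_all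
  have "isolating_edges H a b \<subseteq> (?Ea - {{a, b}}) \<union> (?Eb - {{a, b}})"
    unfolding isolating_edges_def by auto
  then have "card (isolating_edges H a b) \<le> card ((?Ea - {{a, b}}) \<union> (?Eb - {{a, b}}))"
    using fin by (intro card_mono) auto
  also have "\<dots> \<le> card (?Ea - {{a, b}}) + card (?Eb - {{a, b}})" by (rule card_Un_le)
  finally have "card (isolating_edges H a b) \<le> card (?Ea - {{a, b}}) + card (?Eb - {{a, b}})" .
  moreover have "card (?Ea - {{a, b}}) + 1 = card ?Ea" "card (?Eb - {{a, b}}) + 1 = card ?Eb"
    using card.remove[OF fin(1), of "{a, b}"] card.remove[OF fin(2), of "{a, b}"] assms(2) by auto
  ultimately show ?thesis unfolding degree_def by linarith
qed

lemma restricted_edge_cut_isolating_edges: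
  assumes fin: "finite (verts H)"
    and ab: "{a, b} \<in> edges H" "a \<noteq> b" "a \<in> verts H" "b \<in> verts H"
    and c: "c \<in> verts H - {a, b}"
    and nbr: "\<And>v. v \<in> verts H - {a, b} \<Longrightarrow> \<exists>w \<in> verts H - {a, b}. w \<noteq> v \<and> {v, w} \<in> edges H"
  shows "restricted_edge_cut H (isolating_edges H a b)"
proof -
  let ?S = "isolating_edges H a b"
  let ?R = "adj_rel (del_edges H ?S)"
  have cut: "edge_cut H ?S"
    by (rule edge_cut_if_separates[of _ _ a "{a, b}" c]) (use ab c in \<open>auto simp: isolating_edges_def\<close>)
  have "\<exists>w \<in> verts H. w \<noteq> v \<and> (v, w) \<in> ?R" if v: "v \<in> verts H" for v
  proof (cases "v \<in> {a, b}")
    case True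
    then show ?thesis using ab by (auto simp: isolating_edges_def insert_commute)
  next
    case False
    then obtain w where "w \<in> verts H - {a, b}" "w \<noteq> v" "{v, w} \<in> edges H"
      using nbr v by blast
    then show ?thesis using False by (auto simp: isolating_edges_def)
  qed
  then have "2 \<le> card C" if C: "C \<in> components (del_edges H ?S)" for C
  proof -
    obtain v where v: "v \<in> verts H" "C = {y \<in> verts H. (v, y) \<in> ?R\<^sup>*}"
      using C unfolding components_def verts_del_edges by blast
    obtain w where "w \<in> verts H" "w \<noteq> v" "(v, w) \<in> ?R" using \<open>v \<in> verts H \<Longrightarrow> _\<close> v(1) by blast
    then have "{v, w} \<subseteq> C" using v by auto
    moreover have "finite C" using v(2) fin by simp
    ultimately have "card {v, w} \<le> card C" by (rule card_mono[rotated])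
    then show ?thesis using \<open>w \<noteq> v\<close> by simp
  qed
  with cut show ?thesis unfolding restricted_edge_cut_def by blast
qed

lemma sum_card_fibres_le:
  assumes "finite A" "finite DD"
  shows "(\<Sum>D\<in>DD. card {p \<in> A. f p = D}) \<le> card A"
proof -
  have "(\<Sum>D\<in>DD. card {p \<in> A. f p = D}) = card (\<Union>D\<in>DD. {p \<in> A. f p = D})"
    using assms by (subst card_UN_disjoint) auto
  also have "\<dots> \<le> card A" using assms(1) by (intro card_mono) auto
  finally show ?thesis .
qed

lemma card_ge_2I: "finite S \<Longrightarrow> p \<in> S \<Longrightarrow> q \<in> S \<Longrightarrow> p \<noteq> q \<Longrightarrow> 2 \<le> card S"
  using card_mono[of S "{p, q}"] by simp

lemma card_ge_3I:
  "finite S \<Longrightarrow> p \<in> S \<Longrightarrow> q \<in> S \<Longrightarrow> r \<in> S \<Longrightarrow> p \<noteq> q \<Longrightarrow> p \<noteq> r \<Longrightarrow> q \<noteq> r \<Longrightarrow> 3 \<le> card S"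
  using card_mono[of S "{p, q, r}"] by simp

lemma card_add_le_disjoint_images:
  assumes "inj_on f A" "inj_on g B" "f ` A \<subseteq> C" "g ` B \<subseteq> C" "f ` A \<inter> g ` B = {}" "finite C"
  shows "card A + card B \<le> card C"
proof -
  have "card A + card B = card (f ` A \<union> g ` B)"
    using assms finite_subset[of _ C] by (simp add: card_image card_Un_disjoint)
  also have "\<dots> \<le> card C" using assms(3,4,6) by (intro card_mono) auto
  finally show ?thesis .
qed

lemma weighted_degree_bound:
  fixes q1 q2 a1 a2 d :: nat
  assumes "3 \<le> q1 + q2" "1 \<le> q1" "1 \<le> q2" "1 \<le> a1 + a2" "d \<le> a1 + 1" "d \<le> a2 + 1"
  shows "2 * d \<le> q1 * a1 + q2 * a2 + 1"
proof (cases "d \<le> 1")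
  case True
  have "a1 \<le> q1 * a1" "a2 \<le> q2 * a2" using assms(2,3) by simp_all
  then show ?thesis using True assms(4) by linarith
next
  case False
  define e where "e = d - 1"
  have e: "d = e + 1" "1 \<le> e" using False unfolding e_def by auto
  have "3 * e \<le> (q1 + q2) * e" using assms(1) by (rule mult_le_mono1)
  moreover have "q1 * e \<le> q1 * a1" "q2 * e \<le> q2 * a2" using assms(5,6) e by (intro mult_le_mono2; linarith)+
  ultimately have "3 * e \<le> q1 * a1 + q2 * a2" using add_mult_distrib[of q1 q2 e] by linarith
  then show ?thesis using e by linarith
qed

section \<open>The strong product with a cycle\<close>

locale strong_cycle_product =
  fixes G :: "'a graph" and n :: nat
  assumes simple: "simple_graph G" and three_le_n: "3 \<le> n"
begin

abbreviation "V \<equiv> verts G"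

definition adj :: "'a \<Rightarrow> 'a \<Rightarrow> bool" where "adj x z \<longleftrightarrow> {x, z} \<in> edges G"
definition nbhd :: "'a \<Rightarrow> 'a set" where "nbhd x = {z. adj x z}"

definition cnext :: "nat \<Rightarrow> nat" where "cnext i = Suc i mod n"
definition cprev :: "nat \<Rightarrow> nat" where "cprev i = (if i = 0 then n - 1 else i - 1)"

definition GC :: "('a \<times> nat) graph" where "GC = strong_product G (cycle_graph n)"
definition pverts :: "('a \<times> nat) set" where "pverts = V \<times> {0..<n}"

definition padj :: "'a \<times> nat \<Rightarrow> 'a \<times> nat \<Rightarrow> bool" where
  "padj u v \<longleftrightarrow> fst u \<in> V \<and> fst v \<in> V \<and> snd u < n \<and> snd v < n \<and>
     ((fst u = fst v \<and> (snd v = cnext (snd u) \<or> snd u = cnext (snd v))) \<or>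
      (snd u = snd v \<and> adj (fst u) (fst v)) \<or>
      (adj (fst u) (fst v) \<and> (snd v = cnext (snd u) \<or> snd u = cnext (snd v))))"

lemma finite_V: "finite V" using simple by (simp add: simple_graph_def)

lemma finite_edges: "finite (edges G)"
proof -
  have "edges G \<subseteq> Pow V" using simple unfolding simple_graph_def by fastforce
  then show ?thesis by (rule finite_subset) (simp add: finite_V)
qed

lemma adj_sym: "adj x z = adj z x" by (simp add: adj_def insert_commute)

lemma adjD: "adj x z \<Longrightarrow> x \<in> V \<and> z \<in> V \<and> x \<noteq> z"
proof -
  assume "adj x z"
  then obtain a b where "a \<noteq> b" "a \<in> V" "b \<in> V" "{x, z} = {a, b}"
    using simple unfolding adj_def simple_graph_def by blast
  then show ?thesis by (auto simp: doubleton_eq_iff)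
qed

lemma nbhd_subset: "nbhd x \<subseteq> V" unfolding nbhd_def using adjD by blast
lemma finite_nbhd: "finite (nbhd x)" by (rule finite_subset[OF nbhd_subset finite_V])
lemma not_in_nbhd: "x \<notin> nbhd x" unfolding nbhd_def using adjD by blast

lemma degree_eq_card_nbhd: "degree G x = card (nbhd x)"
proof -
  have "{e \<in> edges G. x \<in> e} = (\<lambda>z. {x, z}) ` nbhd x"
  proof (intro equalityI subsetI)
    fix e assume e: "e \<in> {e \<in> edges G. x \<in> e}"
    then obtain z where "e = {x, z}"
      using simple unfolding simple_graph_def by (fastforce simp: insert_commute)
    then show "e \<in> (\<lambda>z. {x, z}) ` nbhd x" using e by (auto simp: nbhd_def adj_def)
  qed (auto simp: nbhd_def adj_def)
  moreover have "inj_on (\<lambda>z. {x, z}) (nbhd x)" by (auto simp: inj_on_def doubleton_eq_iff)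
  ultimately show ?thesis unfolding degree_def by (simp add: card_image)
qed

lemma cnext_less: "cnext i < n" using three_le_n by (simp add: cnext_def)
lemma cnext_eq: "i < n \<Longrightarrow> cnext i = (if Suc i = n then 0 else Suc i)"
  unfolding cnext_def by (cases "Suc i = n") auto
lemma cnext_neq: "i < n \<Longrightarrow> cnext i \<noteq> i" using three_le_n by (simp add: cnext_eq)
lemma cnext_inj: "i < n \<Longrightarrow> j < n \<Longrightarrow> cnext i = cnext j \<Longrightarrow> i = j"
  using three_le_n by (auto simp: cnext_eq split: if_splits)
lemma cnext_cnext_neq: "i < n \<Longrightarrow> cnext (cnext i) \<noteq> i"
  using three_le_n cnext_less[of i] by (auto simp: cnext_eq split: if_splits)
lemma cnext_mod: "cnext (j mod n) = Suc j mod n"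
  unfolding cnext_def by (simp add: mod_Suc_eq)

lemma cprev_less: "i < n \<Longrightarrow> cprev i < n" unfolding cprev_def by auto
lemma cnext_cprev: "i < n \<Longrightarrow> cnext (cprev i) = i"
  using three_le_n unfolding cprev_def by (auto simp: cnext_eq)
lemma cprev_neq: "i < n \<Longrightarrow> cprev i \<noteq> i" using cnext_cprev cnext_neq cprev_less by metis
lemma cprev_neq_cnext: "i < n \<Longrightarrow> cprev i \<noteq> cnext i"
  using cnext_cprev cnext_cnext_neq by metis

lemma cycle_exit:
  assumes "a < n" "a \<in> A" "b < n" "b \<notin> A"
  shows "\<exists>i<n. i \<in> A \<and> cnext i \<notin> A"
proof (rule ccontr)
  assume "\<not> ?thesis"
  then have step: "\<And>i. i < n \<Longrightarrow> i \<in> A \<Longrightarrow> cnext i \<in> A" by blast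
  have "(a + k) mod n \<in> A" for k
  proof (induction k)
    case (Suc k)
    have "cnext ((a + k) mod n) \<in> A" using step Suc three_le_n by simp
    then show ?case by (simp add: cnext_mod)
  qed (use assms in simp)
  from this[of "n - a + b"] show False using assms by simp
qed

lemma cycle_entry:
  assumes "a < n" "a \<in> A" "b < n" "b \<notin> A"
  shows "\<exists>i<n. i \<notin> A \<and> cnext i \<in> A"
  using cycle_exit[of b "- A" a] assms by auto

lemma cycle_edge_iff:
  "{i, j} \<in> edges (cycle_graph n) \<longleftrightarrow> i < n \<and> j < n \<and> (j = cnext i \<or> i = cnext j)"
  using three_le_n unfolding cycle_graph_def edges_def cnext_def by (auto simp: doubleton_eq_iff)

lemma verts_GC: "verts GC = pverts"
  by (simp add: GC_def pverts_def strong_product_def verts_def cycle_graph_def)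

lemma padj_sym: "padj u v = padj v u"
  unfolding padj_def using adj_sym by auto

lemma padj_in_pverts: "padj u v \<Longrightarrow> u \<in> pverts \<and> v \<in> pverts"
  unfolding padj_def pverts_def by (cases u, cases v) auto

lemma strong_product_adj_iff:
  "(x1 \<in> V \<and> x2 \<in> V \<and> y1 \<in> verts (cycle_graph n) \<and> y2 \<in> verts (cycle_graph n) \<and>
    ((x1 = x2 \<and> {y1, y2} \<in> edges (cycle_graph n)) \<or> (y1 = y2 \<and> {x1, x2} \<in> edges G) \<or>
     ({x1, x2} \<in> edges G \<and> {y1, y2} \<in> edges (cycle_graph n)))) \<longleftrightarrow> padj (x1, y1) (x2, y2)"
  unfolding padj_def cycle_edge_iff adj_def verts_cycle_graph fst_conv snd_conv atLeastLessThan_iff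
  by blast

lemma edges_GC: "edges GC = {{u, v} | u v. padj u v}"
  unfolding GC_def strong_product_def edges_def[of "(_, _)"] snd_conv strong_product_adj_iff
  by auto

lemma edge_GC_iff: "{u, v} \<in> edges GC \<longleftrightarrow> padj u v"
proof
  assume "{u, v} \<in> edges GC"
  then obtain a b where "{u, v} = {a, b}" "padj a b" unfolding edges_GC by blast
  then have "(u = a \<and> v = b) \<or> (u = b \<and> v = a)" by (simp add: doubleton_eq_iff)
  then show "padj u v" using padj_sym \<open>padj a b\<close> by blast
qed (unfold edges_GC, blast)

lemma finite_pverts: "finite pverts" unfolding pverts_def using finite_V by simp

lemma finite_edges_GC: "finite (edges GC)"
proof -
  have "edges GC \<subseteq> Pow pverts" unfolding edges_GC using padj_in_pverts by auto
  then show ?thesis by (rule finite_subset) (simp add: finite_pverts)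
qed

abbreviation "delta \<equiv> min_degree G"
abbreviation "lam \<equiv> edge_connectivity G"

lemma min_degree_le: "x \<in> V \<Longrightarrow> delta \<le> card (nbhd x)"
  unfolding min_degree_def using finite_V by (simp add: degree_eq_card_nbhd[symmetric])

lemma min_degree_attained: "V \<noteq> {} \<Longrightarrow> \<exists>x\<in>V. card (nbhd x) = delta"
proof -
  assume "V \<noteq> {}"
  then have "delta \<in> degree G ` V" unfolding min_degree_def using finite_V by (intro Min_in) auto
  then show ?thesis using degree_eq_card_nbhd by auto
qed

definition gbdry :: "'a set \<Rightarrow> ('a \<times> 'a) set" where
  "gbdry B = {(x, z). x \<in> B \<and> z \<in> V - B \<and> adj x z}"

lemma finite_gbdry: "finite (gbdry B)"
proof -
  have "gbdry B \<subseteq> V \<times> V" unfolding gbdry_def using adjD by auto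
  then show ?thesis by (rule finite_subset) (simp add: finite_V)
qed

lemma edge_connectivity_le_gbdry:
  assumes "x \<in> B" "B \<subseteq> V" "z \<in> V" "z \<notin> B"
  shows "lam \<le> card (gbdry B)"
proof -
  let ?S = "(\<lambda>(x, z). {x, z}) ` gbdry B"
  have "edge_cut G ?S"
  proof (rule edge_cut_if_separates[of _ _ x B z])
    fix u v assume "u \<in> B" "v \<notin> B" "{u, v} \<in> edges G"
    then have "(u, v) \<in> gbdry B" using adjD unfolding gbdry_def adj_def by blast
    then show "{u, v} \<in> ?S" by (rule rev_image_eqI) simp
  qed (use assms in \<open>auto simp: gbdry_def adj_def\<close>)
  then have "lam \<le> card ?S" by (rule edge_connectivity_le[OF finite_edges])
  also have "\<dots> \<le> card (gbdry B)" using finite_gbdry by (rule card_image_le)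
  finally show ?thesis .
qed

lemma card_gbdry_singleton: "card (gbdry {x}) \<le> card (nbhd x)"
proof -
  have "gbdry {x} \<subseteq> Pair x ` nbhd x" unfolding gbdry_def nbhd_def by auto
  then have "card (gbdry {x}) \<le> card (Pair x ` nbhd x)" using finite_nbhd by (intro card_mono) auto
  also have "\<dots> \<le> card (nbhd x)" using finite_nbhd by (rule card_image_le)
  finally show ?thesis .
qed

text \<open>The boundary of \<open>X\<close> consists of its leaving edges, oriented out of \<open>X\<close>; \<open>cols\<close> and \<open>rows\<close>
  below record which columns and rows such an edge touches.\<close>

definition bdry :: "('a \<times> nat) set \<Rightarrow> (('a \<times> nat) \<times> ('a \<times> nat)) set" where
  "bdry X = {(u, v). u \<in> X \<and> v \<in> pverts \<and> v \<notin> X \<and> padj u v}"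

lemma finite_bdry: "finite (bdry X)"
proof -
  have "bdry X \<subseteq> pverts \<times> pverts" unfolding bdry_def using padj_in_pverts by auto
  then show ?thesis by (rule finite_subset) (simp add: finite_pverts)
qed

lemma card_bdry_complement:
  assumes "X \<subseteq> pverts" shows "card (bdry (pverts - X)) = card (bdry X)"
proof -
  have "bdry (pverts - X) = prod.swap ` bdry X"
    using assms padj_sym padj_in_pverts unfolding bdry_def by force
  then show ?thesis by (simp add: card_image)
qed

lemma card_bdry_le:
  assumes "S \<subseteq> edges GC" "\<And>u v. u \<in> X \<Longrightarrow> v \<in> pverts - X \<Longrightarrow> padj u v \<Longrightarrow> {u, v} \<in> S"
  shows "card (bdry X) \<le> card S"
proof (rule card_inj_on_le[of "\<lambda>(u, v). {u, v}"])
  show "inj_on (\<lambda>(u, v). {u, v}) (bdry X)"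
    unfolding inj_on_def bdry_def by (auto simp: doubleton_eq_iff)
  show "(\<lambda>(u, v). {u, v}) ` bdry X \<subseteq> S" using assms(2) unfolding bdry_def by auto
  show "finite S" using assms(1) finite_edges_GC by (rule finite_subset)
qed

lemma degree_GC_le:
  assumes y: "y < n"
  shows "degree GC (x, y) \<le> 3 * card (nbhd x) + 2"
proof -
  let ?nbrs = "nbhd x \<times> {y, cnext y, cprev y} \<union> {(x, cnext y), (x, cprev y)}"
  have nbrs: "{v. padj (x, y) v} \<subseteq> ?nbrs"
  proof
    fix v assume "v \<in> {v. padj (x, y) v}"
    then obtain z j where v: "v = (z, j)" "padj (x, y) (z, j)" by (cases v) auto
    then have "j < n" unfolding padj_def by simp
    then have "y = cnext j \<Longrightarrow> j = cprev y"
      using cnext_cprev[OF y] cnext_inj[OF \<open>j < n\<close> cprev_less[OF y]] by simp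
    then show "v \<in> ?nbrs" using v unfolding padj_def nbhd_def by auto
  qed
  have "{e \<in> edges GC. (x, y) \<in> e} \<subseteq> (\<lambda>v. {(x, y), v}) ` ?nbrs"
  proof
    fix e assume "e \<in> {e \<in> edges GC. (x, y) \<in> e}"
    then obtain u v where uv: "e = {u, v}" "padj u v" "(x, y) \<in> e" unfolding edges_GC by auto
    then have "u = (x, y) \<and> padj (x, y) v \<or> v = (x, y) \<and> padj (x, y) u"
      using padj_sym[of u v] by blast
    then have "\<exists>w. e = {(x, y), w} \<and> padj (x, y) w" using uv(1) by (metis insert_commute)
    then show "e \<in> (\<lambda>v. {(x, y), v}) ` ?nbrs" using nbrs by blast
  qed
  then have "degree GC (x, y) \<le> card ((\<lambda>v. {(x, y), v}) ` ?nbrs)"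
    unfolding degree_def using finite_nbhd by (intro card_mono) auto
  also have "\<dots> \<le> card ?nbrs" using finite_nbhd by (intro card_image_le) auto
  also have "\<dots> \<le> card (nbhd x \<times> {y, cnext y, cprev y}) + card {(x, cnext y), (x, cprev y)}"
    by (rule card_Un_le)
  also have "\<dots> \<le> card (nbhd x) * 3 + 2"
    unfolding card_cartesian_product
    by (intro add_mono mult_le_mono2) (auto simp: card_insert_if)
  finally show ?thesis by simp
qed

definition cols :: "('a \<times> nat) \<times> ('a \<times> nat) \<Rightarrow> 'a set" where
  "cols p = {fst (fst p), fst (snd p)}"

definition rows :: "('a \<times> nat) \<times> ('a \<times> nat) \<Rightarrow> nat set" where
  "rows p = {snd (fst p), snd (snd p)}"

abbreviation "bdry_cols X D \<equiv> {p \<in> bdry X. cols p = D}"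
abbreviation "bdry_rows X D \<equiv> {p \<in> bdry X. rows p = D}"

lemma finite_bdry_cols: "finite (bdry_cols X D)" using finite_bdry by simp
lemma finite_bdry_rows: "finite (bdry_rows X D)" using finite_bdry by simp

definition missing :: "('a \<times> nat) set \<Rightarrow> 'a \<Rightarrow> nat set" where
  "missing X x = {i. i < n \<and> (x, i) \<notin> X}"

lemma two_le_bdry_col:
  assumes x: "x \<in> V" and a: "a < n" "(x, a) \<in> X" and b: "b < n" "(x, b) \<notin> X"
  shows "2 \<le> card (bdry_cols X {x})"
proof -
  obtain i where i: "i < n" "(x, i) \<in> X" "(x, cnext i) \<notin> X"
    using cycle_exit[of a "{i. (x, i) \<in> X}" b] a b by auto
  obtain j where j: "j < n" "(x, j) \<notin> X" "(x, cnext j) \<in> X"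
    using cycle_entry[of a "{i. (x, i) \<in> X}" b] a b by auto
  let ?p = "((x, i), (x, cnext i))" and ?q = "((x, cnext j), (x, j))"
  have "?p \<in> bdry_cols X {x}" "?q \<in> bdry_cols X {x}"
    using i j x cnext_less unfolding bdry_def pverts_def cols_def padj_def by auto
  moreover have "?p \<noteq> ?q" using cnext_cnext_neq[OF j(1)] by auto
  ultimately show ?thesis by (intro card_ge_2I[OF finite_bdry_cols])
qed

definition near :: "nat \<Rightarrow> nat \<Rightarrow> bool" where
  "near i j \<longleftrightarrow> i = j \<or> j = cnext i \<or> i = cnext j"

definition row_at :: "'a \<Rightarrow> ('a \<times> nat) \<times> ('a \<times> nat) \<Rightarrow> nat" where
  "row_at z p = (if fst (fst p) = z then snd (fst p) else snd (snd p))"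

text \<open>Whichever side of \<open>X\<close> the cell \<open>(z, j)\<close> lies on, it is adjacent to a cell of column \<open>x\<close>
  on the other side.\<close>

lemma bdry_cols_at_row:
  assumes xz: "adj x z" and j: "j < n"
    and i1: "i1 < n" "near i1 j" "(x, i1) \<in> X" and i2: "i2 < n" "near i2 j" "(x, i2) \<notin> X"
  shows "\<exists>p \<in> bdry_cols X {x, z}. row_at z p = j"
proof -
  have x_z: "x \<in> V" "z \<in> V" "x \<noteq> z" using adjD[OF xz] by auto
  show ?thesis
  proof (cases "(z, j) \<in> X")
    case True
    have "padj (z, j) (x, i2)" using i2 j x_z xz adj_sym unfolding near_def padj_def by auto
    then have "((z, j), (x, i2)) \<in> bdry_cols X {x, z}"
      using True i2 x_z unfolding bdry_def pverts_def cols_def by (auto simp: insert_commute)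
    then show ?thesis by (force simp: row_at_def)
  next
    case False
    have "padj (x, i1) (z, j)" using i1 j x_z xz unfolding near_def padj_def by auto
    then have "((x, i1), (z, j)) \<in> bdry_cols X {x, z}"
      using False i1 j x_z unfolding bdry_def pverts_def cols_def by auto
    then show ?thesis using x_z by (force simp: row_at_def)
  qed
qed

lemma three_le_bdry_cols_split:
  assumes xz: "adj x z" and a: "a < n" "(x, a) \<in> X" and b: "b < n" "(x, b) \<notin> X"
  shows "3 \<le> card (bdry_cols X {x, z})"
proof -
  obtain i where i: "i < n" "(x, i) \<in> X" "(x, cnext i) \<notin> X"
    using cycle_exit[of a "{i. (x, i) \<in> X}" b] a b by auto
  obtain j where j: "j < n" "(x, j) \<notin> X" "(x, cnext j) \<in> X"
    using cycle_entry[of a "{i. (x, i) \<in> X}" b] a b by auto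
  have near: "near k k" "near k (cnext k)" "near (cnext k) k" for k by (auto simp: near_def)
  have nxt: "cnext i < n" "cnext j < n" using cnext_less by auto
  obtain p1 where p1: "p1 \<in> bdry_cols X {x, z}" "row_at z p1 = i"
    using bdry_cols_at_row[OF xz i(1) i(1) near(1) i(2) nxt(1) near(3) i(3)] by blast
  obtain p2 where p2: "p2 \<in> bdry_cols X {x, z}" "row_at z p2 = cnext i"
    using bdry_cols_at_row[OF xz nxt(1) i(1) near(2) i(2) nxt(1) near(1) i(3)] by blast
  obtain p3 where p3: "p3 \<in> bdry_cols X {x, z}" "row_at z p3 = j"
    using bdry_cols_at_row[OF xz j(1) nxt(2) near(3) j(3) j(1) near(1) j(2)] by blast
  obtain p4 where p4: "p4 \<in> bdry_cols X {x, z}" "row_at z p4 = cnext j"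
    using bdry_cols_at_row[OF xz nxt(2) nxt(2) near(1) j(3) j(1) near(2) j(2)] by blast
  have "i \<noteq> j" "i \<noteq> cnext i" "j \<noteq> cnext j" using i j cnext_neq by auto
  show ?thesis
  proof (cases "cnext i = j")
    case False
    then have "p1 \<noteq> p2" "p1 \<noteq> p3" "p2 \<noteq> p3" using p1 p2 p3 \<open>i \<noteq> j\<close> \<open>i \<noteq> cnext i\<close> by metis+
    then show ?thesis using p1 p2 p3 card_ge_3I[OF finite_bdry_cols] by blast
  next
    case True
    then have "i \<noteq> cnext j" using cnext_cnext_neq[OF i(1)] by simp
    then have "p1 \<noteq> p3" "p1 \<noteq> p4" "p3 \<noteq> p4" using p1 p3 p4 \<open>i \<noteq> j\<close> \<open>j \<noteq> cnext j\<close> by metis+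
    then show ?thesis using p1 p3 p4 card_ge_3I[OF finite_bdry_cols] by blast
  qed
qed

text \<open>Next to a column lying entirely in \<open>X\<close>, each row \<open>i\<close> missing from column \<open>x\<close> is entered
  from the three rows \<open>cprev i\<close>, \<open>i\<close>, \<open>cnext i\<close> of the full column.\<close>

lemma bdry_cols_full:
  assumes xz: "adj x z" and full: "\<forall>j<n. (z, j) \<in> X"
  shows "3 * card (missing X x) \<le> card (bdry_cols X {x, z})"
proof -
  have x_z: "x \<in> V" "z \<in> V" "x \<noteq> z" using adjD[OF xz] by auto
  define shift where "shift k i = (if k = (0::nat) then i else if k = 1 then cnext i else cprev i)" for k i
  let ?f = "\<lambda>(i, k). ((z, shift k i), (x, i))"
  have shift_less: "shift k i < n" if "i < n" for i k
    using that cnext_less cprev_less unfolding shift_def by auto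
  have "?f ` (missing X x \<times> {0, 1, 2}) \<subseteq> bdry_cols X {x, z}"
  proof
    fix p assume "p \<in> ?f ` (missing X x \<times> {0, 1, 2})"
    then obtain i k where ik: "i < n" "(x, i) \<notin> X" "k \<in> {0, 1, 2}" "p = ((z, shift k i), (x, i))"
      unfolding missing_def by auto
    have "shift k i = i \<or> i = cnext (shift k i) \<or> shift k i = cnext i"
      using ik cnext_cprev unfolding shift_def by auto
    then have "padj (z, shift k i) (x, i)"
      using ik x_z xz adj_sym shift_less[OF ik(1)] unfolding padj_def by auto
    then show "p \<in> bdry_cols X {x, z}"
      using ik x_z full shift_less[OF ik(1)]
      unfolding bdry_def pverts_def cols_def by (auto simp: insert_commute)
  qed
  moreover have "inj_on ?f (missing X x \<times> {0, 1, 2})"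
  proof (rule inj_onI)
    fix a b assume "a \<in> missing X x \<times> {0, 1, 2}" "b \<in> missing X x \<times> {0, 1, 2}" "?f a = ?f b"
    then obtain i k k' where "a = (i, k)" "b = (i, k')" "i < n" "shift k i = shift k' i"
      "k \<in> {0, 1, 2}" "k' \<in> {0, 1, 2}"
      unfolding missing_def by auto
    then show "a = b"
      using cnext_neq[of i] cprev_neq[of i] cprev_neq_cnext[of i]
      unfolding shift_def by (auto split: if_splits dest: sym)
  qed
  ultimately have "card (missing X x \<times> {0::nat, 1, 2}) \<le> card (bdry_cols X {x, z})"
    by (intro card_inj_on_le[OF _ _ finite_bdry_cols])
  then show ?thesis by (simp add: card_cartesian_product)
qed

definition col_pairs :: "'a \<Rightarrow> 'a set \<Rightarrow> 'a set set" where
  "col_pairs x Z = (\<lambda>z. {x, z}) ` Z"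

lemma sum_col_pairs: "(\<Sum>D\<in>col_pairs x Z. h D) = (\<Sum>z\<in>Z. h {x, z})"
proof -
  have "inj_on (\<lambda>z. {x, z}) Z" by (auto simp: inj_on_def doubleton_eq_iff)
  then show ?thesis unfolding col_pairs_def by (simp add: sum.reindex)
qed

lemma finite_col_pairs: "finite Z \<Longrightarrow> finite (col_pairs x Z)"
  unfolding col_pairs_def by simp

lemma col_pairs_disjoint: "x \<noteq> x' \<Longrightarrow> x' \<notin> Z \<or> x \<notin> Z' \<Longrightarrow> col_pairs x Z \<inter> col_pairs x' Z' = {}"
  unfolding col_pairs_def by (auto simp: doubleton_eq_iff)

lemma singleton_notin_col_pairs:
  assumes "Z \<subseteq> nbhd x" shows "{a} \<notin> col_pairs x Z"
proof
  assume "{a} \<in> col_pairs x Z"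
  then obtain z where "z \<in> Z" "{a} = {x, z}" unfolding col_pairs_def by auto
  then have "x \<in> nbhd x" using assms by blast
  then show False using not_in_nbhd by simp
qed

lemma pair_notin_col_pairs: "x' \<notin> Z \<Longrightarrow> {x, x'} \<notin> col_pairs x Z"
  unfolding col_pairs_def by (auto simp: doubleton_eq_iff)

lemma sum_bdry_cols_split:
  assumes "Z \<subseteq> nbhd x" "a < n" "(x, a) \<in> X" "b < n" "(x, b) \<notin> X"
  shows "3 * card Z \<le> (\<Sum>D\<in>col_pairs x Z. card (bdry_cols X D))"
proof -
  have "card Z * 3 \<le> (\<Sum>z\<in>Z. card (bdry_cols X {x, z}))"
  proof -
    have "3 \<le> card (bdry_cols X {x, z})" if "z \<in> Z" for z
      using that assms(1) by (intro three_le_bdry_cols_split[OF _ assms(2-5)]) (auto simp: nbhd_def)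
    then show ?thesis using sum_bounded_below[of Z "3::nat"] by simp
  qed
  then show ?thesis by (simp add: sum_col_pairs mult.commute)
qed

lemma sum_bdry_cols_full:
  assumes "Z \<subseteq> nbhd x" "\<And>z. z \<in> Z \<Longrightarrow> \<forall>j<n. (z, j) \<in> X"
  shows "3 * card (missing X x) * card Z \<le> (\<Sum>D\<in>col_pairs x Z. card (bdry_cols X D))"
proof -
  have "card Z * (3 * card (missing X x)) \<le> (\<Sum>z\<in>Z. card (bdry_cols X {x, z}))"
  proof -
    have "3 * card (missing X x) \<le> card (bdry_cols X {x, z})" if "z \<in> Z" for z
      using that assms by (intro bdry_cols_full) (auto simp: nbhd_def)
    then show ?thesis using sum_bounded_below[of Z "3 * card (missing X x)"] by simp
  qed
  then show ?thesis by (simp add: sum_col_pairs mult.commute)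
qed

lemma edge_connectivity_le_bdry_row:
  assumes y: "y < n" and f: "f \<in> V" "(f, y) \<in> X" and g: "g \<in> V" "(g, y) \<notin> X"
  shows "lam \<le> card (bdry_rows X {y})"
proof -
  let ?B = "{x \<in> V. (x, y) \<in> X}"
  have "lam \<le> card (gbdry ?B)" by (rule edge_connectivity_le_gbdry[of f _ g]) (use f g in auto)
  also have "\<dots> \<le> card (bdry_rows X {y})"
  proof (rule card_inj_on_le[OF _ _ finite_bdry_rows])
    show "inj_on (\<lambda>(x, z). ((x, y), (z, y))) (gbdry ?B)" by (auto simp: inj_on_def)
    show "(\<lambda>(x, z). ((x, y), (z, y))) ` gbdry ?B \<subseteq> bdry_rows X {y}"
    proof
      fix p assume "p \<in> (\<lambda>(x, z). ((x, y), (z, y))) ` gbdry ?B"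
      then obtain x z where "p = ((x, y), (z, y))" "(x, y) \<in> X" "z \<in> V" "(z, y) \<notin> X" "adj x z"
        unfolding gbdry_def by auto
      then show "p \<in> bdry_rows X {y}"
        using y adjD unfolding bdry_def pverts_def padj_def rows_def by auto
    qed
  qed
  finally show ?thesis .
qed

lemma diagonal_in_bdry_rows:
  assumes "adj x z" "y < n" "(k, k') = (y, cnext y) \<or> (k, k') = (cnext y, y)" "(x, k) \<in> X" "(z, k') \<notin> X"
  shows "((x, k), (z, k')) \<in> bdry_rows X {y, cnext y}"
proof -
  have "padj (x, k) (z, k')" "{k, k'} = {y, cnext y}"
    using assms(1-3) adjD[OF assms(1)] cnext_less unfolding padj_def by auto
  then show ?thesis using assms(4,5) padj_in_pverts unfolding bdry_def rows_def by auto
qed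

text \<open>The columns with both cells of rows \<open>y\<close>, \<open>cnext y\<close> in \<open>X\<close>, and those with at least one,
  both separate \<open>f\<close> from \<open>g\<close> in \<open>G\<close>; their boundaries map disjointly to diagonal edges.\<close>

lemma two_edge_connectivity_le_bdry_rows:
  assumes y: "y < n" and f: "f \<in> V" "(f, y) \<in> X" "(f, cnext y) \<in> X"
    and g: "g \<in> V" "(g, y) \<notin> X" "(g, cnext y) \<notin> X"
  shows "2 * lam \<le> card (bdry_rows X {y, cnext y})"
proof -
  define y' where "y' = cnext y"
  let ?L = "{x \<in> V. (x, y) \<in> X \<and> (x, y') \<in> X}"
  let ?U = "{x \<in> V. (x, y) \<in> X \<or> (x, y') \<in> X}"
  define gL where "gL = (\<lambda>(x :: 'a, z :: 'a). if (z, y') \<notin> X then ((x, y), (z, y')) else ((x, y'), (z, y)))"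
  define gU where "gU = (\<lambda>(x :: 'a, z :: 'a). if (x, y') \<in> X then ((x, y'), (z, y)) else ((x, y), (z, y')))"
  have cols_gL: "fst (fst (gL q)) = fst q" "fst (snd (gL q)) = snd q" for q
    unfolding gL_def by (cases q; simp)+
  have cols_gU: "fst (fst (gU q)) = fst q" "fst (snd (gU q)) = snd q" for q
    unfolding gU_def by (cases q; simp)+
  note diagonal = diagonal_in_bdry_rows[OF _ y, folded y'_def]
  have "lam \<le> card (gbdry ?L)" by (rule edge_connectivity_le_gbdry[of f _ g]) (use f g y'_def in auto)
  moreover have "lam \<le> card (gbdry ?U)" by (rule edge_connectivity_le_gbdry[of f _ g]) (use f g y'_def in auto)
  moreover have "card (gbdry ?L) + card (gbdry ?U) \<le> card (bdry_rows X {y, y'})"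
  proof (rule card_add_le_disjoint_images[OF _ _ _ _ _ finite_bdry_rows])
    show "inj_on gL (gbdry ?L)" by (rule inj_onI) (metis cols_gL prod.collapse)
    show "inj_on gU (gbdry ?U)" by (rule inj_onI) (metis cols_gU prod.collapse)
    show "gL ` gbdry ?L \<subseteq> bdry_rows X {y, y'}"
    proof
      fix p assume "p \<in> gL ` gbdry ?L"
      then obtain x z where "adj x z" "(x, y) \<in> X" "(x, y') \<in> X" "(z, y) \<notin> X \<or> (z, y') \<notin> X"
        "p = gL (x, z)" unfolding gbdry_def by auto
      then show "p \<in> bdry_rows X {y, y'}"
        using diagonal[of x z y y'] diagonal[of x z y' y] unfolding gL_def by auto
    qed
    show "gU ` gbdry ?U \<subseteq> bdry_rows X {y, y'}"
    proof
      fix p assume "p \<in> gU ` gbdry ?U"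
      then obtain x z where "adj x z" "(x, y) \<in> X \<or> (x, y') \<in> X" "(z, y) \<notin> X" "(z, y') \<notin> X"
        "p = gU (x, z)" unfolding gbdry_def by auto
      then show "p \<in> bdry_rows X {y, y'}"
        using diagonal[of x z y y'] diagonal[of x z y' y] unfolding gU_def by auto
    qed
    show "gL ` gbdry ?L \<inter> gU ` gbdry ?U = {}"
    proof (rule ccontr)
      assume "gL ` gbdry ?L \<inter> gU ` gbdry ?U \<noteq> {}"
      then obtain q q' where q: "q \<in> gbdry ?L" "q' \<in> gbdry ?U" "gL q = gU q'" by blast
      then have "q = q'" using cols_gL[of q] cols_gU[of q'] by (metis prod.collapse)
      obtain x z where xz: "q = (x, z)" by (cases q)
      have "(x, y') \<in> X" "(z, y') \<notin> X" using q xz \<open>q = q'\<close> unfolding gbdry_def by auto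
      moreover have "gL (x, z) = gU (x, z)" using q(3) \<open>q = q'\<close> xz by simp
      ultimately show False using cnext_neq[OF y] unfolding gL_def gU_def y'_def by simp
    qed
  qed
  ultimately show ?thesis unfolding y'_def by linarith
qed

lemma bdry_card_ge_if_full_and_empty_col:
  assumes f: "f \<in> V" "\<forall>j<n. (f, j) \<in> X" and g: "g \<in> V" "\<forall>j<n. (g, j) \<notin> X"
  shows "3 * n * lam \<le> card (bdry X)"
proof -
  let ?D1 = "(\<lambda>y. {y}) ` {0..<n}" and ?D2 = "(\<lambda>y. {y, cnext y}) ` {0..<n}"
  have inj1: "inj_on (\<lambda>y. {y}) {0..<n}" by simp
  have inj2: "inj_on (\<lambda>y. {y, cnext y}) {0..<n}"
  proof (rule inj_onI)
    fix a b assume "a \<in> {0..<n}" "b \<in> {0..<n}" "{a, cnext a} = {b, cnext b}"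
    then show "a = b" using cnext_cnext_neq[of b] by (auto simp: doubleton_eq_iff)
  qed
  have "{a} \<noteq> {b, cnext b}" if "b < n" for a b
    using cnext_neq[OF that] by (auto simp: doubleton_eq_iff)
  then have "?D1 \<inter> ?D2 = {}" by auto
  then have "(\<Sum>D\<in>?D1. card (bdry_rows X D)) + (\<Sum>D\<in>?D2. card (bdry_rows X D))
      = (\<Sum>D\<in>?D1 \<union> ?D2. card (bdry_rows X D))"
    by (intro sum.union_disjoint[symmetric]) auto
  also have "\<dots> \<le> card (bdry X)" by (intro sum_card_fibres_le finite_bdry) simp
  finally have "(\<Sum>y<n. card (bdry_rows X {y})) + (\<Sum>y<n. card (bdry_rows X {y, cnext y}))
      \<le> card (bdry X)"
    using inj1 inj2 by (simp add: sum.reindex atLeast0LessThan)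
  moreover have "n * lam \<le> (\<Sum>y<n. card (bdry_rows X {y}))"
    using sum_bounded_below[of "{..<n}" lam] edge_connectivity_le_bdry_row f g by simp
  moreover have "n * (2 * lam) \<le> (\<Sum>y<n. card (bdry_rows X {y, cnext y}))"
    using sum_bounded_below[of "{..<n}" "2 * lam"] two_edge_connectivity_le_bdry_rows f g cnext_less
    by simp
  ultimately show ?thesis by simp
qed
end

section \<open>Boundaries of large sets\<close>

locale small_min_degree = strong_cycle_product +
  assumes two_le_card_V: "2 \<le> card V"
    and lam_large: "6 * delta + 2 < 3 * n * lam"
    and size_large: "6 * delta + 2 < 2 * (card V + 2 * num_edges G)"
begin

lemma lam_pos: "1 \<le> lam" using lam_large by (cases lam) auto

lemma V_nonempty: "V \<noteq> {}" using two_le_card_V by auto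

lemma edge_connectivity_le_degree: "x \<in> V \<Longrightarrow> lam \<le> card (nbhd x)"
proof -
  assume x: "x \<in> V"
  have "\<not> V \<subseteq> {x}" using two_le_card_V card_mono[of "{x}" V] by auto
  then obtain z where "z \<in> V" "z \<noteq> x" by blast
  then have "lam \<le> card (gbdry {x})" using x by (intro edge_connectivity_le_gbdry) auto
  then show ?thesis using card_gbdry_singleton order_trans by blast
qed

lemma min_degree_pos: "1 \<le> delta"
  using min_degree_attained[OF V_nonempty] edge_connectivity_le_degree lam_pos by fastforce

text \<open>This is the only use of the bound on \<open>card V + 2 * num_edges G\<close>: it excludes \<open>G = K\<^sub>2\<close>.\<close>

lemma three_le_card_V: "3 \<le> card V"
proof (rule ccontr)
  assume "\<not> 3 \<le> card V"
  then have two: "card V = 2" using two_le_card_V by simp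
  then obtain a b where ab: "V = {a, b}" unfolding card_2_iff by blast
  have "edges G \<subseteq> {{a, b}}" using simple ab unfolding simple_graph_def by (auto simp: insert_commute)
  then have "num_edges G \<le> 1" unfolding num_edges_def using card_mono[of "{{a, b}}"] by fastforce
  then have "2 * (card V + 2 * num_edges G) \<le> 8" using two by simp
  then show False using size_large min_degree_pos by linarith
qed

lemma three_le_degree_sum:
  assumes xz: "adj x z" shows "3 \<le> card (nbhd x) + card (nbhd z)"
proof (rule ccontr)
  assume small: "\<not> 3 \<le> card (nbhd x) + card (nbhd z)"
  have "z \<in> nbhd x" "x \<in> nbhd z" using xz adj_sym by (auto simp: nbhd_def)
  then have "0 < card (nbhd x)" "0 < card (nbhd z)" using finite_nbhd card_gt_0_iff by blast+
  then have "card (nbhd x) = 1" "card (nbhd z) = 1" using small by linarith+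
  then have nb: "nbhd x = {z}" "nbhd z = {x}"
    using \<open>z \<in> nbhd x\<close> \<open>x \<in> nbhd z\<close> by (auto simp: card_1_singleton_iff)
  have "\<not> V \<subseteq> {x, z}"
  proof
    assume "V \<subseteq> {x, z}"
    then have "card V \<le> card {x, z}" by (intro card_mono) auto
    also have "\<dots> \<le> 2" by (simp add: card_insert_if)
    finally show False using three_le_card_V by simp
  qed
  then obtain w where "w \<in> V" "w \<notin> {x, z}" by blast
  then have "lam \<le> card (gbdry {x, z})" using adjD[OF xz] by (intro edge_connectivity_le_gbdry) auto
  moreover have "gbdry {x, z} = {}" using nb unfolding gbdry_def nbhd_def by auto
  ultimately show False using lam_pos by simp
qed

end

locale column_meeting_set = small_min_degree +
  fixes X :: "('a \<times> nat) set"
  assumes X_subset: "X \<subseteq> pverts"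
    and meets_columns: "\<forall>x\<in>V. \<exists>i<n. (x, i) \<in> X"
    and three_le_card_compl: "3 \<le> card (pverts - X)"
begin

definition split_cols :: "'a set" where "split_cols = {x \<in> V. missing X x \<noteq> {}}"

definition weight :: "'a set \<Rightarrow> nat" where "weight D = card (bdry_cols X D)"

lemma sum_weight_le: "finite DD \<Longrightarrow> sum weight DD \<le> card (bdry X)"
  unfolding weight_def by (rule sum_card_fibres_le[OF finite_bdry])

lemma split_cols_subset: "split_cols \<subseteq> V" unfolding split_cols_def by auto

lemma split_colE:
  assumes "x \<in> split_cols"
  obtains a b where "a < n" "(x, a) \<in> X" "b < n" "(x, b) \<notin> X"
  using assms meets_columns unfolding split_cols_def missing_def by blast

lemma full_col: "x \<in> V \<Longrightarrow> x \<notin> split_cols \<Longrightarrow> \<forall>j<n. (x, j) \<in> X"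
  unfolding split_cols_def missing_def by auto

lemma missing_nonempty: "x \<in> split_cols \<Longrightarrow> 1 \<le> card (missing X x)"
  unfolding split_cols_def missing_def by (auto simp: Suc_le_eq card_gt_0_iff)

lemma two_le_weight_singleton:
  assumes "x \<in> split_cols" shows "2 \<le> weight {x}"
proof -
  obtain a b where "a < n" "(x, a) \<in> X" "b < n" "(x, b) \<notin> X" using assms by (rule split_colE)
  then show ?thesis unfolding weight_def using assms split_cols_subset by (intro two_le_bdry_col) auto
qed

lemma sum_weight_split:
  assumes "x \<in> split_cols" "Z \<subseteq> nbhd x" shows "3 * card Z \<le> sum weight (col_pairs x Z)"
proof -
  obtain a b where "a < n" "(x, a) \<in> X" "b < n" "(x, b) \<notin> X" using assms(1) by (rule split_colE)
  then show ?thesis unfolding weight_def using assms(2) by (intro sum_bdry_cols_split)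
qed

lemma sum_weight_full:
  assumes "Z \<subseteq> nbhd x" "Z \<inter> split_cols = {}"
  shows "3 * card (missing X x) * card Z \<le> sum weight (col_pairs x Z)"
  unfolding weight_def using assms(1)
proof (rule sum_bdry_cols_full)
  fix z assume "z \<in> Z"
  then show "\<forall>j<n. (z, j) \<in> X" using assms full_col nbhd_subset by blast
qed

lemma card_compl_le: "card (pverts - X) \<le> (\<Sum>x\<in>split_cols. card (missing X x))"
proof -
  have fin: "finite split_cols" using finite_subset[OF split_cols_subset finite_V] .
  have "pverts - X \<subseteq> Sigma split_cols (missing X)"
    unfolding pverts_def split_cols_def missing_def by auto
  then have "card (pverts - X) \<le> card (Sigma split_cols (missing X))"
    using fin by (intro card_mono) (auto simp: missing_def)
  also have "\<dots> = (\<Sum>x\<in>split_cols. card (missing X x))"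
    using fin by (intro card_SigmaI) (auto simp: missing_def)
  finally show ?thesis .
qed

lemma split_cols_nonempty: "split_cols \<noteq> {}"
  using card_compl_le three_le_card_compl by auto

lemma bdry_bound_single_split_col:
  assumes "split_cols = {x}"
  shows "6 * delta + 3 \<le> card (bdry X)"
proof -
  have x: "x \<in> V" using assms split_cols_subset by auto
  have "3 \<le> card (missing X x)" using card_compl_le three_le_card_compl assms by simp
  then have "9 * card (nbhd x) \<le> 3 * card (missing X x) * card (nbhd x)" by simp
  also have "\<dots> \<le> sum weight (col_pairs x (nbhd x))"
    using assms not_in_nbhd by (intro sum_weight_full) auto
  also have "\<dots> \<le> card (bdry X)" by (intro sum_weight_le finite_col_pairs finite_nbhd)
  finally show ?thesis using min_degree_le[OF x] min_degree_pos by linarith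
qed

lemma bdry_bound_nonadjacent_split_cols:
  assumes x: "x1 \<in> split_cols" "x2 \<in> split_cols" "x1 \<noteq> x2" "\<not> adj x1 x2"
  shows "6 * delta + 3 \<le> card (bdry X)"
proof -
  let ?F1 = "col_pairs x1 (nbhd x1)" and ?F2 = "col_pairs x2 (nbhd x2)"
  have fin: "finite ?F1" "finite ?F2" by (simp_all add: finite_col_pairs finite_nbhd)
  have "?F1 \<inter> ?F2 = {}" by (rule col_pairs_disjoint) (use x in \<open>auto simp: nbhd_def\<close>)
  moreover have "{{x1}, {x2}} \<inter> (?F1 \<union> ?F2) = {}"
    using singleton_notin_col_pairs[of "nbhd x1" x1] singleton_notin_col_pairs[of "nbhd x2" x2] by auto
  ultimately have "weight {x1} + weight {x2} + sum weight ?F1 + sum weight ?F2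
      = sum weight ({{x1}, {x2}} \<union> (?F1 \<union> ?F2))"
    using fin x(3) by (simp add: sum.union_disjoint)
  also have "\<dots> \<le> card (bdry X)" using fin by (intro sum_weight_le) simp
  finally show ?thesis
    using two_le_weight_singleton[of x1] two_le_weight_singleton[of x2]
      sum_weight_split[of x1 "nbhd x1"] sum_weight_split[of x2 "nbhd x2"]
      min_degree_le[of x1] min_degree_le[of x2] x split_cols_subset by fastforce
qed

lemma bdry_bound_triangle_split_cols:
  assumes x: "x1 \<in> split_cols" "x2 \<in> split_cols" "x3 \<in> split_cols" "x1 \<noteq> x2" "x1 \<noteq> x3" "x2 \<noteq> x3"
    and adj: "adj x1 x2" "adj x1 x3" "adj x2 x3"
  shows "6 * delta + 3 \<le> card (bdry X)"
proof -
  let ?F1 = "col_pairs x1 (nbhd x1)" and ?F2 = "col_pairs x2 (nbhd x2 - {x1})"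
    and ?F3 = "col_pairs x3 (nbhd x3 - {x1, x2})"
  have fin: "finite ?F1" "finite ?F2" "finite ?F3" by (simp_all add: finite_col_pairs finite_nbhd)
  have "?F1 \<inter> ?F2 = {}" "?F1 \<inter> ?F3 = {}" "?F2 \<inter> ?F3 = {}"
    by (rule col_pairs_disjoint; use x in auto)+
  moreover have "{{x1}, {x2}, {x3}} \<inter> (?F1 \<union> (?F2 \<union> ?F3)) = {}"
    using singleton_notin_col_pairs[of "nbhd x1" x1] singleton_notin_col_pairs[of "nbhd x2 - {x1}" x2]
      singleton_notin_col_pairs[of "nbhd x3 - {x1, x2}" x3] by auto
  ultimately have "weight {x1} + weight {x2} + weight {x3} + sum weight ?F1 + sum weight ?F2 + sum weight ?F3
      = sum weight ({{x1}, {x2}, {x3}} \<union> (?F1 \<union> (?F2 \<union> ?F3)))"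
    using fin x(4-6) by (simp add: sum.union_disjoint Int_Un_distrib)
  also have "\<dots> \<le> card (bdry X)" using fin by (intro sum_weight_le) simp
  finally have total: "weight {x1} + weight {x2} + weight {x3} + sum weight ?F1 + sum weight ?F2
      + sum weight ?F3 \<le> card (bdry X)" .
  have nb: "x2 \<in> nbhd x1" "x3 \<in> nbhd x1" "x1 \<in> nbhd x2" "x1 \<in> nbhd x3" "x2 \<in> nbhd x3"
    using adj adj_sym unfolding nbhd_def by auto
  have "card (nbhd x2 - {x1}) + 1 = card (nbhd x2)" using card.remove[OF finite_nbhd nb(3)] by simp
  moreover have "card (nbhd x3 - {x1, x2}) + 2 = card (nbhd x3)"
  proof -
    have "card {x1, x2} \<le> card (nbhd x3)" using nb finite_nbhd by (intro card_mono) auto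
    then show ?thesis using nb x(4) by (simp add: card_Diff_subset finite_nbhd)
  qed
  moreover have "2 \<le> card (nbhd x1)" using nb finite_nbhd x(6) card_ge_2I by metis
  moreover have "delta \<le> card (nbhd x1)" "delta \<le> card (nbhd x2)" "delta \<le> card (nbhd x3)"
    using min_degree_le x split_cols_subset by blast+
  moreover have "2 \<le> weight {x1}" "2 \<le> weight {x2}" "2 \<le> weight {x3}"
    using two_le_weight_singleton x by blast+
  moreover have "3 * card (nbhd x1) \<le> sum weight ?F1" "3 * card (nbhd x2 - {x1}) \<le> sum weight ?F2"
    "3 * card (nbhd x3 - {x1, x2}) \<le> sum weight ?F3"
    using sum_weight_split x by auto
  ultimately show ?thesis using total by (cases "delta \<le> 2") linarith+
qed

lemma bdry_bound_adjacent_split_cols: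
  assumes T: "split_cols = {x1, x2}" and x: "x1 \<noteq> x2" and adj: "adj x1 x2"
  shows "6 * delta + 3 \<le> card (bdry X)"
proof -
  have xT: "x1 \<in> split_cols" "x2 \<in> split_cols" using T by auto
  let ?F1 = "col_pairs x1 (nbhd x1 - {x2})" and ?F2 = "col_pairs x2 (nbhd x2 - {x1})"
  have fin: "finite ?F1" "finite ?F2" by (simp_all add: finite_col_pairs finite_nbhd)
  have "?F1 \<inter> ?F2 = {}" by (rule col_pairs_disjoint) (use x in auto)
  moreover have "{{x1}, {x2}, {x1, x2}} \<inter> (?F1 \<union> ?F2) = {}"
    using singleton_notin_col_pairs[of "nbhd x1 - {x2}" x1] singleton_notin_col_pairs[of "nbhd x2 - {x1}" x2]
      pair_notin_col_pairs[of x2 "nbhd x1 - {x2}" x1]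
      pair_notin_col_pairs[of x1 "nbhd x2 - {x1}" x2, unfolded insert_commute[of x2 x1]]
    by auto
  ultimately have "weight {x1} + weight {x2} + weight {x1, x2} + sum weight ?F1 + sum weight ?F2
      = sum weight ({{x1}, {x2}, {x1, x2}} \<union> (?F1 \<union> ?F2))"
    using fin x by (simp add: sum.union_disjoint doubleton_eq_iff)
  also have "\<dots> \<le> card (bdry X)" using fin by (intro sum_weight_le) simp
  finally have total: "weight {x1} + weight {x2} + weight {x1, x2} + sum weight ?F1 + sum weight ?F2
      \<le> card (bdry X)" .
  define q1 where "q1 = card (missing X x1)"
  define q2 where "q2 = card (missing X x2)"
  define a1 where "a1 = card (nbhd x1 - {x2})"
  define a2 where "a2 = card (nbhd x2 - {x1})"
  have nb: "x2 \<in> nbhd x1" "x1 \<in> nbhd x2" using adj adj_sym unfolding nbhd_def by auto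
  have a1: "a1 + 1 = card (nbhd x1)" unfolding a1_def using card.remove[OF finite_nbhd nb(1)] by simp
  have a2: "a2 + 1 = card (nbhd x2)" unfolding a2_def using card.remove[OF finite_nbhd nb(2)] by simp
  have "delta \<le> card (nbhd x1)" "delta \<le> card (nbhd x2)"
    using min_degree_le xT split_cols_subset by blast+
  then have "2 * delta \<le> q1 * a1 + q2 * a2 + 1"
  proof (intro weighted_degree_bound)
    show "3 \<le> q1 + q2" using card_compl_le three_le_card_compl T x unfolding q1_def q2_def by simp
    show "1 \<le> q1" "1 \<le> q2" unfolding q1_def q2_def using missing_nonempty xT by blast+
    show "1 \<le> a1 + a2" using three_le_degree_sum[OF adj] a1 a2 by linarith
  qed (use a1 a2 in linarith)+
  moreover have "3 * (q1 * a1) \<le> sum weight ?F1" "3 * (q2 * a2) \<le> sum weight ?F2"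
    unfolding q1_def q2_def a1_def a2_def mult.assoc[symmetric]
    using T not_in_nbhd by (intro sum_weight_full; auto)+
  moreover have "3 \<le> weight {x1, x2}"
  proof -
    obtain a b where "a < n" "(x1, a) \<in> X" "b < n" "(x1, b) \<notin> X" using xT(1) by (rule split_colE)
    then show ?thesis unfolding weight_def by (rule three_le_bdry_cols_split[OF adj])
  qed
  moreover have "2 \<le> weight {x1}" "2 \<le> weight {x2}" using two_le_weight_singleton xT by blast+
  ultimately show ?thesis using total by linarith
qed

lemma bdry_bound: "6 * delta + 3 \<le> card (bdry X)"
proof (cases "\<exists>x1\<in>split_cols. \<exists>x2\<in>split_cols. x1 \<noteq> x2 \<and> \<not> adj x1 x2")
  case True
  then show ?thesis using bdry_bound_nonadjacent_split_cols by blast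
next
  case False
  then have clique: "\<And>x1 x2. x1 \<in> split_cols \<Longrightarrow> x2 \<in> split_cols \<Longrightarrow> x1 \<noteq> x2 \<Longrightarrow> adj x1 x2"
    by blast
  obtain x1 where x1: "x1 \<in> split_cols" using split_cols_nonempty by blast
  show ?thesis
  proof (cases "split_cols = {x1}")
    case True
    then show ?thesis by (rule bdry_bound_single_split_col)
  next
    case False
    then obtain x2 where x2: "x2 \<in> split_cols" "x2 \<noteq> x1" using x1 by blast
    show ?thesis
    proof (cases "split_cols = {x1, x2}")
      case True
      then show ?thesis using clique x1 x2 by (intro bdry_bound_adjacent_split_cols) auto
    next
      case False
      then obtain x3 where x3: "x3 \<in> split_cols" "x3 \<noteq> x1" "x3 \<noteq> x2" using x1 x2 by blast
      show ?thesis
        by (rule bdry_bound_triangle_split_cols[OF x1 x2(1) x3(1)]) (use clique x1 x2 x3 in auto)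
    qed
  qed
qed

end

section \<open>Minimum restricted cuts\<close>

context small_min_degree
begin

lemma bdry_card_ge:
  assumes X: "X \<subseteq> pverts" "3 \<le> card X" "3 \<le> card (pverts - X)"
  shows "6 * delta + 3 \<le> card (bdry X)"
proof (cases "(\<exists>f\<in>V. \<forall>j<n. (f, j) \<in> X) \<and> (\<exists>g\<in>V. \<forall>j<n. (g, j) \<notin> X)")
  case True
  then have "3 * n * lam \<le> card (bdry X)" using bdry_card_ge_if_full_and_empty_col by blast
  then show ?thesis using lam_large by linarith
next
  case False
  show ?thesis
  proof (cases "\<forall>x\<in>V. \<exists>i<n. (x, i) \<in> X")
    case True
    interpret column_meeting_set G n X by unfold_locales (use X True in auto)
    show ?thesis by (rule bdry_bound)
  next
    case no_full: False
    \<comment> \<open>then no column lies in \<open>X\<close>, so every column meets the complement\<close>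
    have "pverts - (pverts - X) = X" using X(1) by auto
    then interpret column_meeting_set G n "pverts - X"
      by unfold_locales (use X False no_full in \<open>auto simp: pverts_def\<close>)
    show ?thesis using bdry_bound card_bdry_complement[OF X(1)] by simp
  qed
qed

lemma small_restricted_edge_cut:
  obtains S where "restricted_edge_cut GC S" "card S \<le> 6 * delta + 2"
proof -
  obtain x0 where x0: "x0 \<in> V" "card (nbhd x0) = delta" using min_degree_attained[OF V_nonempty] by blast
  then have "nbhd x0 \<noteq> {}" using min_degree_pos by auto
  then obtain z0 where z0: "adj x0 z0" unfolding nbhd_def by blast
  let ?a = "(x0, 0)" and ?b = "(x0, 1)"
  have n: "0 < n" "1 < n" "2 < n" and next0: "cnext 0 = 1" using three_le_n by (auto simp: cnext_def)
  have ab: "{?a, ?b} \<in> edges GC" unfolding edge_GC_iff padj_def using x0 n next0 by simp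
  have "restricted_edge_cut GC (isolating_edges GC ?a ?b)"
  proof (rule restricted_edge_cut_isolating_edges[where c = "(x0, 2)"])
    fix v assume v: "v \<in> verts GC - {?a, ?b}"
    then obtain z j where zj: "v = (z, j)" "z \<in> V" "j < n" by (auto simp: verts_GC pverts_def)
    show "\<exists>w \<in> verts GC - {?a, ?b}. w \<noteq> v \<and> {v, w} \<in> edges GC"
    proof (cases "z = x0")
      case True
      have "padj v (z0, j)" using True zj z0 adjD[OF z0] unfolding padj_def by simp
      moreover have "(z0, j) \<in> verts GC - {?a, ?b}" "(z0, j) \<noteq> v"
        using zj adjD[OF z0] True by (auto simp: verts_GC pverts_def)
      ultimately show ?thesis using edge_GC_iff by blast
    next
      case False
      have "padj v (z, cnext j)" using zj cnext_less unfolding padj_def by simp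
      moreover have "(z, cnext j) \<in> verts GC - {?a, ?b}" "(z, cnext j) \<noteq> v"
        using zj False cnext_less cnext_neq[of j] by (auto simp: verts_GC pverts_def)
      ultimately show ?thesis using edge_GC_iff by blast
    qed
  qed (use ab x0 n in \<open>auto simp: verts_GC pverts_def finite_V\<close>)
  moreover have "card (isolating_edges GC ?a ?b) + 2 \<le> degree GC ?a + degree GC ?b"
    by (rule card_isolating_edges[OF finite_edges_GC ab])
  then have "card (isolating_edges GC ?a ?b) \<le> 6 * delta + 2"
    using degree_GC_le[of 0 x0] degree_GC_le[of 1 x0] n x0 by simp
  ultimately show ?thesis using that by blast
qed

lemma super_restricted_edge_connected_GC: "super_restricted_edge_connected GC"
  unfolding super_restricted_edge_connected_def
proof (intro allI impI)
  fix S assume "restricted_edge_cut GC S \<and> (\<forall>T. restricted_edge_cut GC T \<longrightarrow> card S \<le> card T)"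
  then have S: "edge_cut GC S" "\<And>C. C \<in> components (del_edges GC S) \<Longrightarrow> 2 \<le> card C"
    and min: "\<And>T. restricted_edge_cut GC T \<Longrightarrow> card S \<le> card T"
    unfolding restricted_edge_cut_def by blast+
  show "\<exists>C\<in>components (del_edges GC S). card C = 2"
  proof (rule ccontr)
    assume no_edge: "\<not> (\<exists>C\<in>components (del_edges GC S). card C = 2)"
    have three: "3 \<le> card C" if "C \<in> components (del_edges GC S)" for C
      using S(2)[OF that] no_edge that by fastforce
    have "\<not> connected_graph (del_edges GC S)" using S(1) unfolding edge_cut_def by blast
    moreover have "verts (del_edges GC S) \<noteq> {}"
      using V_nonempty three_le_n by (auto simp: verts_GC pverts_def)
    ultimately obtain X D where XD: "X \<in> components (del_edges GC S)" "D \<in> components (del_edges GC S)"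
      "D \<subseteq> verts (del_edges GC S) - X"
      by (rule disconnected_two_components)
    have X: "X \<subseteq> pverts" using component_subset[OF XD(1)] by (simp add: verts_GC)
    have "3 \<le> card D" using three XD(2) .
    also have "\<dots> \<le> card (pverts - X)" using XD(3) finite_pverts by (intro card_mono) (auto simp: verts_GC)
    finally have "6 * delta + 3 \<le> card (bdry X)" using bdry_card_ge X three[OF XD(1)] by blast
    also have "\<dots> \<le> card S"
    proof (rule card_bdry_le)
      show "S \<subseteq> edges GC" using S(1) unfolding edge_cut_def by blast
      show "{u, v} \<in> S" if "u \<in> X" "v \<in> pverts - X" "padj u v" for u v
        using edge_leaving_component[OF XD(1)] that by (simp add: verts_GC edge_GC_iff)
    qed
    also obtain T where "restricted_edge_cut GC T" "card T \<le> 6 * delta + 2"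
      by (rule small_restricted_edge_cut)
    then have "card S \<le> 6 * delta + 2" using min[of T] by simp
    finally show False by simp
  qed
qed

end

theorem corollary3p6:
  fixes G :: "'a graph" and n :: nat
  assumes "simple_graph G"
    and "connected_graph G"
    and "card (verts G) \<ge> 2"
    and "n \<ge> 3"
    and "min (3 * n * edge_connectivity G) (2 * (card (verts G) + 2 * num_edges G))
           > 6 * min_degree G + 2"
  shows "super_restricted_edge_connected (strong_product G (cycle_graph n))"
proof -
  interpret small_min_degree G n
    by unfold_locales (use assms in auto)
  show ?thesis using super_restricted_edge_connected_GC unfolding GC_def .
qed

end
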